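(* Let $z\ge 1$ be an integer and let $n[z,1;4]$ be the order of a $[z,1;4]$-mixed cage. Then $$n[z,1;4]\le\begin{cases}3(z+1) & \text{if } z \text{ is odd},\\ 3z+2 & \text{if } z \text{ is even}.\end{cases}$$ Moreover, equality holds for $z\in\{1,2\}$, i.e. $n[1,1;4]=6$ and $n[2,1;4]=8$.
   Context: A mixed graph is a finite simple graph that may contain both edges and arcs. A $[z,r;g]$-mixed graph is a mixed graph in which every vertex is the tail of exactly $z$ arcs, the head of exactly $z$ arcs, and is incident with exactly $r$ edges, and whose girth is $g$. Walks traverse edges in either direction and arcs only in their direction; a cycle is a closed walk with no repeated vertices (other than start = end) and no repeated edge or arc; the girth is the length of a shortest cycle. A $[z,r;g]$-mixed cage is a $[z,r;g]$-mixed graph of minimum order. *)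

theory Defs
  imports Main
begin

text \<open>A finite simple mixed graph on a vertex set V of naturals: E is the (symmetric,
irreflexive) edge relation, A the (irreflexive) arc relation, A u v meaning an arc u -> v.
Simplicity: an unordered pair carries at most one edge or one arc (no edge and arc on the
same pair, no two opposite arcs).\<close>

definition mixed_graph :: "nat set \<Rightarrow> (nat \<Rightarrow> nat \<Rightarrow> bool) \<Rightarrow> (nat \<Rightarrow> nat \<Rightarrow> bool) \<Rightarrow> bool" where
  "mixed_graph V E A \<longleftrightarrow> finite V
     \<and> (\<forall>u v. E u v \<longrightarrow> u \<in> V \<and> v \<in> V)
     \<and> (\<forall>u v. A u v \<longrightarrow> u \<in> V \<and> v \<in> V)
     \<and> (\<forall>u v. E u v \<longleftrightarrow> E v u)
     \<and> (\<forall>u. \<not> E u u \<and> \<not> A u u)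
     \<and> (\<forall>u v. \<not> (E u v \<and> A u v))
     \<and> (\<forall>u v. \<not> (A u v \<and> A v u))"

definition mstep :: "(nat \<Rightarrow> nat \<Rightarrow> bool) \<Rightarrow> (nat \<Rightarrow> nat \<Rightarrow> bool) \<Rightarrow> nat \<Rightarrow> nat \<Rightarrow> bool" where
  "mstep E A u v \<longleftrightarrow> E u v \<or> A u v"

text \<open>A cycle of length k = length vs: the closed walk vs!0, vs!1, ..., vs!(k-1), vs!0,
with no repeated vertex and no repeated edge/arc. For k >= 3 distinct vertices already
force distinct edges/arcs; for k = 2 the two steps must not both use the same edge.\<close>
definition mcycle :: "(nat \<Rightarrow> nat \<Rightarrow> bool) \<Rightarrow> (nat \<Rightarrow> nat \<Rightarrow> bool) \<Rightarrow> nat list \<Rightarrow> bool" where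
  "mcycle E A vs \<longleftrightarrow> length vs \<ge> 2 \<and> distinct vs
     \<and> (\<forall>i < length vs. mstep E A (vs ! i) (vs ! ((i + 1) mod length vs)))
     \<and> (length vs = 2 \<longrightarrow> \<not> (E (vs ! 0) (vs ! 1) \<and> \<not> A (vs ! 0) (vs ! 1) \<and> \<not> A (vs ! 1) (vs ! 0)))"

definition mgirth_is :: "(nat \<Rightarrow> nat \<Rightarrow> bool) \<Rightarrow> (nat \<Rightarrow> nat \<Rightarrow> bool) \<Rightarrow> nat \<Rightarrow> bool" where
  "mgirth_is E A g \<longleftrightarrow> (\<exists>vs. mcycle E A vs \<and> length vs = g)
     \<and> (\<forall>vs. mcycle E A vs \<longrightarrow> length vs \<ge> g)"

definition zrg_mixed_graph :: "nat \<Rightarrow> nat \<Rightarrow> nat \<Rightarrow> nat set \<Rightarrow> (nat \<Rightarrow> nat \<Rightarrow> bool) \<Rightarrow> (nat \<Rightarrow> nat \<Rightarrow> bool) \<Rightarrow> bool" where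
  "zrg_mixed_graph z r g V E A \<longleftrightarrow> mixed_graph V E A
     \<and> (\<forall>u\<in>V. card {v. A u v} = z \<and> card {v. A v u} = z \<and> card {v. E u v} = r)
     \<and> mgirth_is E A g"

definition mixed_cage_order :: "nat \<Rightarrow> nat \<Rightarrow> nat \<Rightarrow> nat" where
  "mixed_cage_order z r g = (LEAST n. \<exists>V E A. zrg_mixed_graph z r g V E A \<and> card V = n)"

end

theory Submission
  imports Defs "HOL-Library.Z2" "HOL-Library.Disjoint_Sets"
begin

text \<open>Upper bound: on \<open>\<int>/2m\<int>\<close> with \<open>m = 2a + b + 1\<close>, join \<open>u\<close> and \<open>u + m\<close> by an edge and
  put arcs \<open>u \<rightarrow> u + s\<close> for \<open>s \<in> {1..a} \<union> {m+1..m+b}\<close>. No two arc steps and no three steps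
  (arcs or the edge) sum to \<open>0\<close> modulo \<open>2m\<close>, so the graph is simple and has no triangle.
  Taking \<open>a = \<lceil>z/2\<rceil>\<close>, \<open>b = \<lfloor>z/2\<rfloor>\<close> gives a \<open>[z,1;4]\<close>-mixed graph of order \<open>3(z+1)\<close> or
  \<open>3z+2\<close>.

  Lower bound: the edges form a perfect matching, so the order is even. A vertex \<open>u\<close>, its edge
  partner and its \<open>z\<close> in- and \<open>z\<close> out-neighbours are \<open>2z+2\<close> distinct vertices, and girth 4
  forbids them to be all of \<open>V\<close>. So the order is at least \<open>2z+4\<close>, which is \<open>6\<close> and \<open>8\<close>
  for \<open>z = 1, 2\<close>.\<close>

lemma card_even_if_fixpoint_free_involution:
  assumes "finite X" "\<And>x. x \<in> X \<Longrightarrow> h x \<in> X" "\<And>x. x \<in> X \<Longrightarrow> h (h x) = x"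
    and "\<And>x. x \<in> X \<Longrightarrow> h x \<noteq> x"
  shows "even (card X)"
proof -
  \<comment> \<open>Count modulo 2: each orbit \<open>{x, h x}\<close> contributes \<open>1 + 1 = 0\<close>.\<close>
  have "(\<Sum>x\<in>X. 1 :: bit) = 0"
    by (rule sum_involution_eq_0[where h = h]) (use assms in auto)
  then have "of_nat (card X) = (0 :: bit)"
    by simp
  then show ?thesis
    by (metis even_of_nat even_zero)
qed

lemma dvd_imp_eq_mult_less:
  fixes n x k :: nat
  assumes "n dvd x" "x < k * n"
  obtains q where "q < k" "x = q * n"
proof -
  obtain q where "x = q * n" using assms(1) by (metis dvd_def mult.commute)
  moreover from this have "q < k" using assms(2) by simp
  ultimately show thesis using that by blast
qed

lemma mcycle_3I:
  assumes "distinct [a, b, c]" "mstep E A a b" "mstep E A b c" "mstep E A c a"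
  shows "mcycle E A [a, b, c]"
proof -
  have "mstep E A ([a, b, c] ! i) ([a, b, c] ! ((i + 1) mod 3))" if "i < 3" for i
  proof -
    from that have "i = 0 \<or> i = 1 \<or> i = 2" by auto
    with assms(2-4) show ?thesis by auto
  qed
  with assms(1) show ?thesis by (simp add: mcycle_def)
qed

lemma mcycle_4I:
  assumes "distinct [a, b, c, d]" "mstep E A a b" "mstep E A b c" "mstep E A c d" "mstep E A d a"
  shows "mcycle E A [a, b, c, d]"
proof -
  have "mstep E A ([a, b, c, d] ! i) ([a, b, c, d] ! ((i + 1) mod 4))" if "i < 4" for i
  proof -
    from that have "i = 0 \<or> i = 1 \<or> i = 2 \<or> i = 3" by auto
    with assms(2-5) show ?thesis by auto
  qed
  with assms(1) show ?thesis by (simp add: mcycle_def)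
qed

lemma mcycle_length_ge_3:
  assumes "mixed_graph V E A" "mcycle E A vs"
  shows "3 \<le> length vs"
proof (rule ccontr)
  assume "\<not> 3 \<le> length vs"
  with assms(2) have len: "length vs = 2" by (simp add: mcycle_def)
  let ?a = "vs ! 0" and ?b = "vs ! 1"
  from assms(2) len have "mstep E A ?a ?b" "mstep E A ?b ?a"
    "\<not> (E ?a ?b \<and> \<not> A ?a ?b \<and> \<not> A ?b ?a)"
    unfolding mcycle_def by (auto dest: spec[of _ 0] spec[of _ 1])
  moreover from assms(1) have "E ?b ?a \<longleftrightarrow> E ?a ?b" "\<not> (E ?a ?b \<and> A ?a ?b)"
    "\<not> (E ?b ?a \<and> A ?b ?a)" "\<not> (A ?a ?b \<and> A ?b ?a)"
    unfolding mixed_graph_def by blast+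
  ultimately show False unfolding mstep_def by blast
qed

lemma mgirth_is_4I:
  assumes "mixed_graph V E A" "mcycle E A cyc" "length cyc = 4"
    and no_triangle: "\<And>u v w. distinct [u, v, w] \<Longrightarrow> mstep E A u v \<Longrightarrow> mstep E A v w
      \<Longrightarrow> mstep E A w u \<Longrightarrow> False"
  shows "mgirth_is E A 4"
  unfolding mgirth_is_def
proof (intro conjI allI impI)
  show "\<exists>vs. mcycle E A vs \<and> length vs = 4" using assms(2,3) by blast
next
  fix vs assume vs: "mcycle E A vs"
  show "4 \<le> length vs"
  proof (rule ccontr)
    assume "\<not> 4 \<le> length vs"
    with mcycle_length_ge_3[OF assms(1) vs] have len: "length vs = 3" by simp
    with vs have "mstep E A (vs ! i) (vs ! ((i + 1) mod 3))" if "i < 3" for i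
      using that by (simp add: mcycle_def)
    from this[of 0] this[of 1] this[of 2] have
      "mstep E A (vs ! 0) (vs ! 1)" "mstep E A (vs ! 1) (vs ! 2)" "mstep E A (vs ! 2) (vs ! 0)"
      by (simp_all add: numeral_2_eq_2)
    moreover from vs len have "distinct [vs ! 0, vs ! 1, vs ! 2]"
      by (auto simp: mcycle_def nth_eq_iff_index_eq)
    ultimately show False using no_triangle by blast
  qed
qed

section \<open>Circulant mixed graphs\<close>

text \<open>For \<open>u, v < n\<close> this is the residue of \<open>v - u\<close> modulo \<open>n\<close>, written so that no
  truncated subtraction occurs.\<close>
definition circ_diff :: "nat \<Rightarrow> nat \<Rightarrow> nat \<Rightarrow> nat" where
  "circ_diff n u v = (v + n - u) mod n"

definition circ_edge :: "nat \<Rightarrow> nat \<Rightarrow> nat \<Rightarrow> nat \<Rightarrow> bool" where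
  "circ_edge n m u v \<longleftrightarrow> u < n \<and> v < n \<and> circ_diff n u v = m"

definition circ_arc :: "nat \<Rightarrow> nat set \<Rightarrow> nat \<Rightarrow> nat \<Rightarrow> bool" where
  "circ_arc n S u v \<longleftrightarrow> u < n \<and> v < n \<and> circ_diff n u v \<in> S"

lemma circ_diff_less: "0 < n \<Longrightarrow> circ_diff n u v < n"
  by (simp add: circ_diff_def)

lemma circ_diff_self [simp]: "circ_diff n u u = 0"
  by (simp add: circ_diff_def)

lemma circ_diff_eq_diff: "u \<le> v \<Longrightarrow> v < n \<Longrightarrow> circ_diff n u v = v - u"
  unfolding circ_diff_def using less_imp_diff_less mod_if by auto

lemma circ_diff_add_mod: "u < n \<Longrightarrow> s < n \<Longrightarrow> circ_diff n u ((u + s) mod n) = s"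
  by (cases "u + s < n") (simp_all add: circ_diff_def le_mod_geq)

lemma add_circ_diff_mod: "u < n \<Longrightarrow> v < n \<Longrightarrow> (u + circ_diff n u v) mod n = v"
proof -
  assume "u < n" "v < n"
  then have "u + (v + n - u) = v + n" by simp
  then show ?thesis using \<open>v < n\<close> by (simp add: circ_diff_def mod_add_right_eq)
qed

lemma circ_diff_circ_diff:
  assumes "u < n" "v < n"
  shows "circ_diff n (circ_diff n v u) u = v"
proof (cases "v \<le> u")
  case True
  then show ?thesis using assms by (simp add: circ_diff_eq_diff)
next
  case False
  then have "circ_diff n v u = u + n - v" using assms by (simp add: circ_diff_def)
  then show ?thesis using assms False by (simp add: circ_diff_def)
qed

lemma circ_diff_cycle:
  assumes "u < n" "v < n" "w < n"
  shows "n dvd circ_diff n u v + circ_diff n v w + circ_diff n w u"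
proof -
  have "(v + n - u) + (w + n - v) + (u + n - w) = 3 * n" using assms by arith
  then show ?thesis unfolding circ_diff_def
    by (metis mod_0_imp_dvd mod_add_eq mod_add_right_eq mod_mult_self2_is_0)
qed

lemma mstep_circ_iff:
  "mstep (circ_edge n m) (circ_arc n S) u v \<longleftrightarrow> u < n \<and> v < n \<and> circ_diff n u v \<in> insert m S"
  by (auto simp: mstep_def circ_edge_def circ_arc_def)

lemma card_circ_out_neighbours:
  assumes "S \<subseteq> {..<n}" "u < n"
  shows "card {v. v < n \<and> circ_diff n u v \<in> S} = card S"
proof -
  have "bij_betw (circ_diff n u) {v. v < n \<and> circ_diff n u v \<in> S} S"
    by (rule bij_betw_byWitness[where f' = "\<lambda>s. (u + s) mod n"])
      (use assms in \<open>auto simp: circ_diff_add_mod add_circ_diff_mod\<close>)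
  then show ?thesis by (rule bij_betw_same_card)
qed

lemma card_circ_in_neighbours:
  assumes "S \<subseteq> {..<n}" "u < n"
  shows "card {v. v < n \<and> circ_diff n v u \<in> S} = card S"
proof -
  have "bij_betw (\<lambda>v. circ_diff n v u) {v. v < n \<and> circ_diff n v u \<in> S} S"
    by (rule bij_betw_byWitness[where f' = "\<lambda>s. circ_diff n s u"])
      (use assms in \<open>auto simp: circ_diff_circ_diff circ_diff_less\<close>)
  then show ?thesis by (rule bij_betw_same_card)
qed

lemma circulant_degrees:
  assumes "S \<subseteq> {..<n}" "m < n" "u < n"
  shows "card {v. circ_arc n S u v} = card S" "card {v. circ_arc n S v u} = card S"
    and "card {v. circ_edge n m u v} = 1"
proof -
  show "card {v. circ_arc n S u v} = card S" "card {v. circ_arc n S v u} = card S"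
    using card_circ_out_neighbours[OF assms(1,3)] card_circ_in_neighbours[OF assms(1,3)] assms(3)
    by (simp_all add: circ_arc_def)
  have "{v. circ_edge n m u v} = {v. v < n \<and> circ_diff n u v \<in> {m}}"
    using assms(3) by (auto simp: circ_edge_def)
  then show "card {v. circ_edge n m u v} = 1"
    using card_circ_out_neighbours[of "{m}" n u] assms(2,3) by simp
qed

lemma circulant_mixed_graph:
  assumes "0 < m" "S \<subseteq> {0<..<2 * m}" "m \<notin> S"
    and no_opposite: "\<And>x y. x \<in> S \<Longrightarrow> y \<in> S \<Longrightarrow> \<not> 2 * m dvd x + y"
  shows "mixed_graph {..<2 * m} (circ_edge (2 * m) m) (circ_arc (2 * m) S)"
proof -
  let ?n = "2 * m"
  have edge_sym: "circ_edge ?n m v u" if "circ_edge ?n m u v" for u v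
  proof -
    from that have uv: "u < ?n" "v < ?n" "circ_diff ?n u v = m" by (simp_all add: circ_edge_def)
    have "?n dvd m + circ_diff ?n v u" using circ_diff_cycle[of u ?n v u] uv by simp
    moreover have "m + circ_diff ?n v u < 2 * ?n" using circ_diff_less[of ?n v u] assms(1) by simp
    ultimately obtain q where "q < 2" "m + circ_diff ?n v u = q * ?n"
      by (rule dvd_imp_eq_mult_less)
    then have "circ_diff ?n v u = m" using assms(1) by (auto simp: less_2_cases_iff)
    with uv show ?thesis by (simp add: circ_edge_def)
  qed
  have arc_asym: "\<not> (circ_arc ?n S u v \<and> circ_arc ?n S v u)" for u v
    using no_opposite circ_diff_cycle[of u ?n v u] by (auto simp: circ_arc_def)
  show ?thesis unfolding mixed_graph_def
    using edge_sym arc_asym assms(1-3) by (auto simp: circ_edge_def circ_arc_def)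
qed

lemma circulant_no_triangle:
  assumes "\<And>x y w. x \<in> insert m S \<Longrightarrow> y \<in> insert m S \<Longrightarrow> w \<in> insert m S \<Longrightarrow> \<not> n dvd x + y + w"
    and "mstep (circ_edge n m) (circ_arc n S) u v" "mstep (circ_edge n m) (circ_arc n S) v w"
    "mstep (circ_edge n m) (circ_arc n S) w u"
  shows False
proof -
  from assms(2-4) have "u < n" "v < n" "w < n" "circ_diff n u v \<in> insert m S"
    "circ_diff n v w \<in> insert m S" "circ_diff n w u \<in> insert m S"
    by (simp_all add: mstep_circ_iff)
  with assms(1) circ_diff_cycle show False by blast
qed

lemma two_steps_not_dvd:
  fixes a b m x y :: nat
  assumes "m = 2 * a + b + 1" "x \<in> {1..a} \<union> {m + 1..m + b}" "y \<in> {1..a} \<union> {m + 1..m + b}"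
  shows "\<not> 2 * m dvd x + y"
proof
  assume "2 * m dvd x + y"
  moreover have "x + y < 2 * (2 * m)" using assms by auto
  ultimately obtain q where "q < 2" "x + y = q * (2 * m)" by (rule dvd_imp_eq_mult_less)
  with assms show False by (auto simp: less_2_cases_iff)
qed

text \<open>Three long steps sum to at most \<open>3 * (m + b) < 4 * m\<close>: this is where \<open>b \<le> a\<close> is needed.\<close>
lemma three_steps_not_dvd:
  fixes a b m x y w :: nat
  assumes "b \<le> a" "m = 2 * a + b + 1"
    and "x \<in> {1..a} \<union> {m..m + b}" "y \<in> {1..a} \<union> {m..m + b}" "w \<in> {1..a} \<union> {m..m + b}"
  shows "\<not> 2 * m dvd x + y + w"
proof
  assume "2 * m dvd x + y + w"
  moreover have "x + y + w < 3 * (2 * m)" using assms by auto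
  ultimately obtain q where "q < 3" "x + y + w = q * (2 * m)" by (rule dvd_imp_eq_mult_less)
  then have "x + y + w = 0 \<or> x + y + w = 2 * m \<or> x + y + w = 4 * m"
    by (auto simp: numeral_eq_Suc less_Suc_eq)
  with assms show False by auto
qed

text \<open>The 4-cycle is \<open>0 \<rightarrow> a \<rightarrow> 2a \<rightarrow> -1 \<rightarrow> 0\<close>, with steps \<open>a, a, m + b, 1\<close>; the third
  one is the edge when \<open>b = 0\<close>.\<close>
lemma circulant_z1_4_graph:
  fixes a b m :: nat
  assumes "1 \<le> a" "b \<le> a" "m = 2 * a + b + 1"
  defines "S \<equiv> {1..a} \<union> {m + 1..m + b}"
  shows "zrg_mixed_graph (a + b) 1 4 {..<2 * m} (circ_edge (2 * m) m) (circ_arc (2 * m) S)"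
proof -
  let ?n = "2 * m" and ?E = "circ_edge (2 * m) m" and ?A = "circ_arc (2 * m) S"
  have S: "S \<subseteq> {0<..<?n}" "m \<notin> S" "card S = a + b"
    by (auto simp: S_def assms(3) card_Un_disjoint)
  have steps: "insert m S = {1..a} \<union> {m..m + b}"
    by (auto simp: S_def assms(3))
  have no_triangle: "\<not> ?n dvd x + y + w"
    if "x \<in> insert m S" "y \<in> insert m S" "w \<in> insert m S" for x y w
    using three_steps_not_dvd[OF assms(2,3)] that unfolding steps by blast
  have G: "mixed_graph {..<?n} ?E ?A"
    using S two_steps_not_dvd[OF assms(3)] unfolding S_def
    by (intro circulant_mixed_graph) (auto simp: assms(3))
  have "a \<in> insert m S" "m + b \<in> insert m S" "1 \<in> insert m S"
    using assms(1) unfolding steps by auto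
  moreover have "0 < m" "a < m" "2 * a < ?n - 1" using assms(3) by simp_all
  moreover have "circ_diff ?n (2 * a) (?n - 1) = m + b"
    using assms(3) by (subst circ_diff_eq_diff) auto
  moreover have "circ_diff ?n (?n - 1) 0 = 1"
    using assms(3) by (simp add: circ_diff_def)
  ultimately have cycle: "mcycle ?E ?A [0, a, 2 * a, ?n - 1]"
    using assms(1) by (intro mcycle_4I) (simp_all add: mstep_circ_iff circ_diff_eq_diff)
  have "mgirth_is ?E ?A 4"
    by (rule mgirth_is_4I[OF G cycle], simp, meson circulant_no_triangle[OF no_triangle])
  moreover have "S \<subseteq> {..<?n}" "m < ?n" using S(1) assms(3) by auto
  ultimately show ?thesis
    using G circulant_degrees S(3) unfolding zrg_mixed_graph_def by auto
qed

lemma z1_4_mixed_graph_exists: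
  assumes "1 \<le> z"
  shows "\<exists>V E A. zrg_mixed_graph z 1 4 V E A \<and> card V = (if odd z then 3 * (z + 1) else 3 * z + 2)"
proof -
  define a b where "a = (z + 1) div 2" and "b = z div 2"
  have ab: "1 \<le> a" "b \<le> a" "a + b = z" using assms by (auto simp: a_def b_def)
  have "card {..<2 * (2 * a + b + 1)} = (if odd z then 3 * (z + 1) else 3 * z + 2)"
    by (cases "odd z") (auto simp: a_def b_def elim!: oddE evenE)
  with circulant_z1_4_graph[OF ab(1,2) refl] ab(3) show ?thesis by metis
qed

section \<open>The lower bound\<close>

locale z1_4_mixed_graph =
  fixes z :: nat and V :: "nat set" and E A :: "nat \<Rightarrow> nat \<Rightarrow> bool"
  assumes zrg: "zrg_mixed_graph z 1 4 V E A"
begin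

lemma finite_vertices: "finite V"
  and edge_in_V: "E u v \<Longrightarrow> v \<in> V"
  and arc_in_V: "A u v \<Longrightarrow> u \<in> V \<and> v \<in> V"
  and edge_sym: "E u v \<Longrightarrow> E v u"
  and edge_irrefl: "\<not> E u u"
  and arc_irrefl: "\<not> A u u"
  and edge_not_arc: "E u v \<Longrightarrow> \<not> A u v"
  and arc_asym: "A u v \<Longrightarrow> \<not> A v u"
  and out_degree: "u \<in> V \<Longrightarrow> card {v. A u v} = z"
  and in_degree: "u \<in> V \<Longrightarrow> card {v. A v u} = z"
  and edge_degree: "u \<in> V \<Longrightarrow> card {v. E u v} = 1"
  and girth: "mgirth_is E A 4"
  using zrg unfolding zrg_mixed_graph_def mixed_graph_def by blast+

lemma edge_partner_unique:
  assumes "u \<in> V" "E u v" "E u w"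
  shows "v = w"
proof -
  obtain c where "{v. E u v} = {c}" using edge_degree[OF assms(1)] by (rule card_1_singletonE)
  with assms(2,3) show ?thesis by (auto simp: set_eq_iff)
qed

lemma edge_partner_exists:
  assumes "u \<in> V"
  obtains v where "E u v"
proof -
  obtain c where "{v. E u v} = {c}" using edge_degree[OF assms] by (rule card_1_singletonE)
  then show thesis using that by (auto simp: set_eq_iff)
qed

lemma no_triangle:
  assumes "distinct [u, v, w]" "mstep E A u v" "mstep E A v w" "mstep E A w u"
  shows False
proof -
  have "mcycle E A [u, v, w]" using assms by (rule mcycle_3I)
  with girth have "4 \<le> length [u, v, w]" unfolding mgirth_is_def by blast
  then show False by simp
qed

lemma vertices_nonempty: "V \<noteq> {}"
proof -
  obtain vs where "mcycle E A vs" "length vs = 4" using girth unfolding mgirth_is_def by blast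
  then have "mstep E A (vs ! 0) (vs ! 1)" unfolding mcycle_def by (auto dest: spec[of _ 0])
  then show ?thesis using edge_in_V arc_in_V unfolding mstep_def by blast
qed

lemma card_even: "even (card V)"
proof -
  let ?h = "\<lambda>u. THE v. E u v"
  have partner: "E u (?h u)" if u: "u \<in> V" for u
  proof -
    obtain v where "E u v" using edge_partner_exists[OF u] .
    with edge_partner_unique[OF u] have "\<exists>!v. E u v" by blast
    then show ?thesis by (rule theI')
  qed
  show ?thesis
  proof (rule card_even_if_fixpoint_free_involution[OF finite_vertices])
    show "?h u \<in> V" "?h u \<noteq> u" if "u \<in> V" for u
      using partner[OF that] edge_in_V edge_irrefl by metis+
    show "?h (?h u) = u" if "u \<in> V" for u
      using partner[OF that] partner[of "?h u"] edge_in_V edge_sym edge_partner_unique by metis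
  qed
qed


lemma finite_arc_neighbours: "finite {v. A u v}" "finite {v. A v u}"
  using finite_vertices arc_in_V by (auto intro: rev_finite_subset)

lemma card_closed_neighbourhood:
  assumes "u \<in> V" "E u c"
  shows "card (insert u (insert c ({v. A u v} \<union> {v. A v u}))) = 2 * z + 2"
proof -
  have "{v. A u v} \<inter> {v. A v u} = {}" using arc_asym by blast
  moreover have "c \<notin> {v. A u v} \<union> {v. A v u}"
    using assms(2) edge_not_arc edge_sym by blast
  moreover have "u \<notin> insert c ({v. A u v} \<union> {v. A v u})"
    using assms(2) edge_irrefl arc_irrefl by blast
  ultimately show ?thesis
    using finite_arc_neighbours out_degree[OF assms(1)] in_degree[OF assms(1)]
    by (simp add: card_Un_disjoint)
qed

lemma closed_neighbourhood_subset:
  assumes "u \<in> V" "E u c"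
  shows "insert u (insert c ({v. A u v} \<union> {v. A v u})) \<subseteq> V"
  using assms edge_in_V arc_in_V by blast

text \<open>If the closed neighbourhood of \<open>u\<close> were all of \<open>V\<close>, the edge partner of an
  out-neighbour \<open>a\<close> of \<open>u\<close> would have to be another out-neighbour of \<open>u\<close>, leaving too few
  heads for the arcs out of \<open>a\<close>.\<close>
lemma card_ne_tight:
  assumes "1 \<le> z"
  shows "card V \<noteq> 2 * z + 2"
proof
  assume tight: "card V = 2 * z + 2"
  obtain u where u: "u \<in> V" using vertices_nonempty by blast
  obtain c where c: "E u c" using edge_partner_exists[OF u] .
  let ?Out = "{v. A u v}" and ?In = "{v. A v u}"
  have V: "V = insert u (insert c (?Out \<union> ?In))"
    using card_subset_eq[OF finite_vertices closed_neighbourhood_subset[OF u c]]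
      card_closed_neighbourhood[OF u c] tight by simp
  have "?Out \<noteq> {}" using out_degree[OF u] assms by (metis card.empty not_one_le_zero)
  then obtain a where a: "A u a" by blast
  have aV: "a \<in> V" using a arc_in_V by blast
  have no_back: "\<not> mstep E A a v" if "A v u" for v
    using no_triangle[of u a v] a that arc_asym arc_irrefl by (auto simp: mstep_def)
  obtain e where e: "E a e" using edge_partner_exists[OF aV] .
  have "e \<in> ?Out"
  proof -
    have "e \<noteq> u" using a c e edge_not_arc edge_partner_unique[OF u] edge_sym by metis
    moreover have "e \<noteq> c" using c e edge_sym edge_partner_unique arc_irrefl a edge_in_V by metis
    moreover have "e \<notin> ?In" using no_back e by (auto simp: mstep_def)
    ultimately show ?thesis using e edge_in_V V by blast
  qed
  note fin = finite_arc_neighbours(1)[of u]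
  have "a \<noteq> e" using e edge_irrefl by blast
  then have "{a, e} \<subseteq> ?Out" "card {a, e} = 2" using a \<open>e \<in> ?Out\<close> by auto
  then have "card (?Out - {a, e}) + 2 = z"
    using out_degree[OF u] fin card_mono[OF fin \<open>{a, e} \<subseteq> ?Out\<close>] by (simp add: card_Diff_subset)
  have "{v. A a v} \<subseteq> insert c (?Out - {a, e})"
    using V arc_in_V arc_asym[OF a] no_back arc_irrefl edge_not_arc[OF e] by (auto simp: mstep_def)
  then have "card {v. A a v} \<le> card (insert c (?Out - {a, e}))"
    using fin by (intro card_mono) auto
  also have "\<dots> \<le> card (?Out - {a, e}) + 1"
    using fin by (simp add: card_insert_if)
  finally show False using \<open>card (?Out - {a, e}) + 2 = z\<close> out_degree[OF aV] by simp
qed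

lemma card_lower_bound:
  assumes "1 \<le> z"
  shows "2 * z + 4 \<le> card V"
proof -
  obtain u where u: "u \<in> V" using vertices_nonempty by blast
  obtain c where c: "E u c" using edge_partner_exists[OF u] .
  have "2 * z + 2 \<le> card V"
    using card_mono[OF finite_vertices closed_neighbourhood_subset[OF u c]]
      card_closed_neighbourhood[OF u c] by simp
  with card_ne_tight[OF assms] card_even show ?thesis by presburger
qed

end

lemma mixed_cage_order_le:
  assumes "zrg_mixed_graph z r g V E A"
  shows "mixed_cage_order z r g \<le> card V"
  unfolding mixed_cage_order_def using assms by (blast intro: Least_le)

lemma mixed_cage_order_z1_4_le:
  assumes "1 \<le> z"
  shows "mixed_cage_order z 1 4 \<le> (if odd z then 3 * (z + 1) else 3 * z + 2)"
proof -
  obtain V E A where G: "zrg_mixed_graph z 1 4 V E A"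
    and "card V = (if odd z then 3 * (z + 1) else 3 * z + 2)"
    using z1_4_mixed_graph_exists[OF assms] by blast
  with mixed_cage_order_le[OF G] show ?thesis by simp
qed

lemma mixed_cage_order_z1_4_ge:
  assumes "1 \<le> z"
  shows "2 * z + 4 \<le> mixed_cage_order z 1 4"
proof -
  have "\<exists>V E A. zrg_mixed_graph z 1 4 V E A \<and> card V = mixed_cage_order z 1 4"
    unfolding mixed_cage_order_def by (rule LeastI_ex) (use z1_4_mixed_graph_exists[OF assms] in blast)
  then obtain V E A where G: "zrg_mixed_graph z 1 4 V E A" "card V = mixed_cage_order z 1 4"
    by blast
  from G(2) z1_4_mixed_graph.card_lower_bound[OF z1_4_mixed_graph.intro[OF G(1)] assms]
  show ?thesis by simp
qed

theorem theorem9: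
  fixes z :: nat
  assumes "z \<ge> 1"
  shows "mixed_cage_order z 1 4 \<le> (if odd z then 3 * (z + 1) else 3 * z + 2)
         \<and> mixed_cage_order 1 1 4 = 6 \<and> mixed_cage_order 2 1 4 = 8"
  using mixed_cage_order_z1_4_le[OF assms] mixed_cage_order_z1_4_le[of 1]
    mixed_cage_order_z1_4_ge[of 1] mixed_cage_order_z1_4_le[of 2] mixed_cage_order_z1_4_ge[of 2]
  by simp

end
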